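(* Let $d\ge 0$ be an integer, let $G$ be any finite $d$-regular graph and let $\lambda>0$. Then \[ \alpha_G(\lambda) \le \alpha_{K_{d+1}}(\lambda), \] with equality if and only if $G$ is a disjoint union of copies of $K_{d+1}$.
   Context: Graphs are finite, simple and have at least one vertex. A Widom--Rowlinson configuration on a graph $G$ is a map $\chi:V(G)\to\{0,1,2\}$ such that no vertex coloured $1$ is adjacent to a vertex coloured $2$. Let $\Omega(G)$ be the set of such configurations and $X_i(\chi)$ the number of vertices coloured $i$. The Widom--Rowlinson model on $G$ with activity $\lambda>0$ is the probability distribution on $\Omega(G)$ given by $\mathbb{P}[\chi]=\lambda^{X_1(\chi)+X_2(\chi)}/P_G(\lambda)$, where $P_G(\lambda)=\sum_{\chi\in\Omega(G)}\lambda^{X_1(\chi)+X_2(\chi)}$ is the partition function. The occupancy fraction is $\alpha_G(\lambda)=\mathbb{E}[X_1+X_2]/|V(G)|$, the expectation being over $\chi$ drawn from this model. $K_{d+1}$ denotes the complete graph on $d+1$ vertices. *)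

theory Defs
  imports "HOL-Analysis.Analysis" "HOL-Library.Disjoint_Sets"
begin

definition simple_graph :: "'a set \<Rightarrow> ('a \<Rightarrow> 'a \<Rightarrow> bool) \<Rightarrow> bool" where
  "simple_graph V E \<longleftrightarrow> finite V \<and> V \<noteq> {} \<and>
     (\<forall>u v. E u v \<longrightarrow> u \<in> V \<and> v \<in> V) \<and>
     (\<forall>u v. E u v \<longrightarrow> E v u) \<and> (\<forall>v. \<not> E v v)"

definition regular :: "'a set \<Rightarrow> ('a \<Rightarrow> 'a \<Rightarrow> bool) \<Rightarrow> nat \<Rightarrow> bool" where
  "regular V E d \<longleftrightarrow> (\<forall>v\<in>V. card {u\<in>V. E v u} = d)"

definition WR_configs :: "'a set \<Rightarrow> ('a \<Rightarrow> 'a \<Rightarrow> bool) \<Rightarrow> ('a \<Rightarrow> nat) set" where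
  "WR_configs V E = {c. c \<in> (V \<rightarrow>\<^sub>E {0,1,2}) \<and>
     (\<forall>u\<in>V. \<forall>v\<in>V. E u v \<longrightarrow> \<not> (c u = 1 \<and> c v = 2))}"

definition colour_count :: "'a set \<Rightarrow> ('a \<Rightarrow> nat) \<Rightarrow> nat \<Rightarrow> nat" where
  "colour_count V c i = card {v\<in>V. c v = i}"

definition occupied :: "'a set \<Rightarrow> ('a \<Rightarrow> nat) \<Rightarrow> nat" where
  "occupied V c = colour_count V c 1 + colour_count V c 2"

definition WR_partition :: "'a set \<Rightarrow> ('a \<Rightarrow> 'a \<Rightarrow> bool) \<Rightarrow> real \<Rightarrow> real" where
  "WR_partition V E lam = (\<Sum>c\<in>WR_configs V E. lam ^ occupied V c)"

definition WR_occupancy :: "'a set \<Rightarrow> ('a \<Rightarrow> 'a \<Rightarrow> bool) \<Rightarrow> real \<Rightarrow> real" where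
  "WR_occupancy V E lam =
     (\<Sum>c\<in>WR_configs V E. real (occupied V c) * lam ^ occupied V c / WR_partition V E lam)
     / real (card V)"

definition K_verts :: "nat \<Rightarrow> nat set" where
  "K_verts d = {..d}"

definition K_edges :: "nat \<Rightarrow> nat \<Rightarrow> nat \<Rightarrow> bool" where
  "K_edges d i j \<longleftrightarrow> i \<le> d \<and> j \<le> d \<and> i \<noteq> j"

definition disjoint_union_of_cliques :: "'a set \<Rightarrow> ('a \<Rightarrow> 'a \<Rightarrow> bool) \<Rightarrow> nat \<Rightarrow> bool" where
  "disjoint_union_of_cliques V E d \<longleftrightarrow>
     (\<exists>P. partition_on V P \<and> (\<forall>B\<in>P. card B = d + 1) \<and>
       (\<forall>u\<in>V. \<forall>v\<in>V. E u v \<longleftrightarrow> (u \<noteq> v \<and> (\<exists>B\<in>P. u \<in> B \<and> v \<in> B))))"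

end

theory Submission
  imports Defs
begin

text \<open>Put \<open>q = (1 + \<lambda>)\<^sup>d\<close> and \<open>s = (q - 1) / d\<close>. For a vertex \<open>v\<close> weigh each configuration
  \<open>\<sigma>\<close> by \<open>\<lambda>\<^bsup>|\<sigma>|\<^esup>((1 + 2\<lambda>) q [\<sigma> v \<noteq> 0] + s \<cdot> #occupied neighbours of v)\<close>. Summed over all
  vertices this is \<open>P\<^sub>K \<cdot> \<Sum>\<sigma> |\<sigma>| \<lambda>\<^bsup>|\<sigma>|\<^esup>\<close> by regularity, where \<open>P\<^sub>K = (1 + 2\<lambda>) q + s d\<close> is the
  partition function of \<open>K\<^sub>d\<^sub>+\<^sub>1\<close>. Conditioning instead on the configuration with \<open>v\<close> emptied, the
  weight of \<open>v\<close> is \<open>2\<lambda>q P\<^sub>G\<close> minus two defects, one per colour. Hence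
  \<open>\<alpha>\<^sub>G = 2\<lambda>q / P\<^sub>K - (total defect) / (P\<^sub>K P\<^sub>G |V|)\<close>.
  Grouping the configurations with \<open>v\<close> empty and a neighbour of colour \<open>i\<close> by the configuration
  obtained by erasing colour \<open>i\<close> from the neighbours of \<open>v\<close>, each defect becomes a sum of explicit
  polynomials in \<open>\<lambda>\<close>, indexed by the non-empty sets of neighbours that can be recoloured \<open>i\<close>. Since
  \<open>(1 - x\<^bsup>-r\<^esup>) / r\<close> decreases in \<open>r\<close> these are non-negative; they all vanish when every neighbourhood
  is a clique (so \<open>K\<^sub>d\<^sub>+\<^sub>1\<close> has no defect), and one is positive as soon as a neighbourhood
  contains a non-edge.\<close>

lemma sum_power_card_Pow:
  fixes l :: "'b::comm_semiring_1"
  assumes "finite A"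
  shows "(\<Sum>T\<in>Pow A. l ^ card T) = (1 + l) ^ card A"
  using prod_add[OF assms, of "\<lambda>_. l" "\<lambda>_. 1"] by (simp add: add.commute)

lemma sum_card_power_card_Pow:
  fixes l :: "'b::comm_semiring_1"
  assumes "finite A"
  shows "(1 + l) * (\<Sum>T\<in>Pow A. of_nat (card T) * l ^ card T) = of_nat (card A) * l * (1 + l) ^ card A"
  using assms
proof (induction A rule: finite_induct)
  case empty
  then show ?case by simp
next
  case (insert a F)
  let ?S = "\<lambda>A. \<Sum>T\<in>Pow A. of_nat (card T) * l ^ card T"
  have "Pow F \<inter> insert a ` Pow F = {}" and "inj_on (insert a) (Pow F)"
    using insert by (auto simp: inj_on_def)
  then have "?S (insert a F) = ?S F + (\<Sum>T\<in>Pow F. of_nat (card (insert a T)) * l ^ card (insert a T))"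
    using insert by (simp add: Pow_insert sum.union_disjoint sum.reindex)
  also have "(\<Sum>T\<in>Pow F. of_nat (card (insert a T)) * l ^ card (insert a T))
      = l * ?S F + l * (\<Sum>T\<in>Pow F. l ^ card T)"
  proof -
    have "of_nat (card (insert a T)) * l ^ card (insert a T) = l * (of_nat (card T) * l ^ card T) + l * l ^ card T"
      if "T \<in> Pow F" for T
    proof -
      have "a \<notin> T" "finite T"
        using insert that finite_subset[of T F] by auto
      then show ?thesis
        by (simp add: algebra_simps)
    qed
    then show ?thesis
      by (simp add: sum.distrib sum_distrib_left)
  qed
  finally have "?S (insert a F) = (1 + l) * ?S F + l * (1 + l) ^ card F"
    using insert by (simp add: sum_power_card_Pow algebra_simps)
  then show ?case
    using insert by (simp add: algebra_simps)
qed

lemma sum_Pow_nonempty_eq: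
  fixes l q s :: real
  assumes "finite A"
  shows "(\<Sum>T\<in>Pow A - {{}}. l ^ card T * (l * q - (1 + l) * s * card T))
       = l * (q * ((1 + l) ^ card A - 1) - s * card A * (1 + l) ^ card A)"
proof -
  have "(\<Sum>T\<in>Pow A. l ^ card T * (l * q - (1 + l) * s * card T))
      = l * q * (\<Sum>T\<in>Pow A. l ^ card T) - s * ((1 + l) * (\<Sum>T\<in>Pow A. of_nat (card T) * l ^ card T))"
    by (simp add: sum_subtractf sum_distrib_left algebra_simps)
  also have "\<dots> = l * q * (1 + l) ^ card A - s * (card A * l * (1 + l) ^ card A)"
    using assms by (simp add: sum_power_card_Pow sum_card_power_card_Pow)
  finally show ?thesis
    using assms by (simp add: sum_diff1 algebra_simps)
qed

lemma power_minus_one_le: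
  fixes x :: real
  assumes "1 \<le> x"
  shows "x ^ m - 1 \<le> m * (x - 1) * x ^ m"
proof (induction m)
  case 0
  then show ?case by simp
next
  case (Suc m)
  have "x * (x ^ m - 1) \<le> x * (m * (x - 1) * x ^ m)"
    using Suc assms by (intro mult_left_mono) auto
  moreover have "x - 1 \<le> (x - 1) * x ^ Suc m"
    using mult_left_mono[OF one_le_power[OF assms, of "Suc m"], of "x - 1"] assms by simp
  ultimately have "x * (x ^ m - 1) + (x - 1) \<le> x * (m * (x - 1) * x ^ m) + (x - 1) * x ^ Suc m"
    by linarith
  then show ?case
    by (simp add: algebra_simps)
qed

text \<open>For \<open>x \<ge> 1\<close> the ratio \<open>(1 - 1 / x ^ r) / r\<close> is non-increasing in \<open>r\<close>.\<close>

lemma power_minus_one_ratio_le: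
  fixes x :: real
  assumes "1 \<le> x" and "r \<le> n"
  shows "r * (x ^ n - 1) * x ^ r \<le> n * x ^ n * (x ^ r - 1)"
proof -
  obtain m where n: "n = r + m"
    using assms(2) le_Suc_ex by blast
  define y where "y = x ^ r"
  define z where "z = x ^ m"
  have "1 \<le> y" "1 \<le> z"
    using assms(1) by (simp_all add: y_def z_def)
  have "r * (x - 1) \<le> y - 1"
    using Bernoulli_inequality[of "x - 1" r] assms(1) by (simp add: y_def)
  have "r * (z - 1) \<le> r * (m * (x - 1) * z)"
    using power_minus_one_le[OF assms(1), of m] by (intro mult_left_mono) (auto simp: z_def)
  also have "\<dots> = m * z * (r * (x - 1))"
    by (simp add: algebra_simps)
  also have "\<dots> \<le> m * z * (y - 1)"
    using \<open>r * (x - 1) \<le> y - 1\<close> \<open>1 \<le> z\<close> by (intro mult_left_mono) auto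
  finally have "0 \<le> y * (m * z * (y - 1) - r * (z - 1))"
    using \<open>1 \<le> y\<close> by simp
  also have "\<dots> = n * (y * z) * (y - 1) - r * (y * z - 1) * y"
    by (simp add: n algebra_simps)
  finally show ?thesis
    by (simp add: n power_add y_def z_def)
qed


locale finite_simple_graph =
  fixes V :: "'a set" and E :: "'a \<Rightarrow> 'a \<Rightarrow> bool"
  assumes simple_graph: "simple_graph V E"
begin

lemma finite_V: "finite V"
  and V_nonempty: "V \<noteq> {}"
  and edge_in_V: "E u w \<Longrightarrow> u \<in> V \<and> w \<in> V"
  and edge_sym: "E u w \<Longrightarrow> E w u"
  and no_loop: "\<not> E u u"
  using simple_graph unfolding simple_graph_def by blast+

definition nbhd :: "'a \<Rightarrow> 'a set" where
  "nbhd v = {u\<in>V. E v u}"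

lemma in_nbhd_iff: "u \<in> nbhd v \<longleftrightarrow> E v u"
  using edge_in_V by (auto simp: nbhd_def)

lemma nbhd_subset: "nbhd v \<subseteq> V"
  by (auto simp: nbhd_def)

lemma finite_nbhd: "finite (nbhd v)"
  using finite_V nbhd_subset by (rule finite_subset[rotated])

lemma not_in_nbhd: "v \<notin> nbhd v"
  using no_loop by (simp add: in_nbhd_iff)

abbreviation configs :: "('a \<Rightarrow> nat) set" where
  "configs \<equiv> WR_configs V E"

lemma in_configs_iff:
  "\<sigma> \<in> configs \<longleftrightarrow> \<sigma> \<in> extensional V \<and> (\<forall>u\<in>V. \<sigma> u \<le> 2) \<and>
     (\<forall>u w. E u w \<longrightarrow> \<sigma> u = 0 \<or> \<sigma> w = 0 \<or> \<sigma> u = \<sigma> w)"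
proof -
  have colours: "(\<forall>u\<in>V. \<sigma> u \<in> {0, 1, 2}) \<longleftrightarrow> (\<forall>u\<in>V. \<sigma> u \<le> 2)"
    by (auto simp: le_Suc_eq numeral_2_eq_2)
  have edges: "(\<forall>u\<in>V. \<forall>w\<in>V. E u w \<longrightarrow> \<not> (\<sigma> u = 1 \<and> \<sigma> w = 2)) \<longleftrightarrow>
      (\<forall>u w. E u w \<longrightarrow> \<sigma> u = 0 \<or> \<sigma> w = 0 \<or> \<sigma> u = \<sigma> w)"
    if "\<forall>u\<in>V. \<sigma> u \<in> {0, 1, 2}"
  proof
    assume no_12: "\<forall>u\<in>V. \<forall>w\<in>V. E u w \<longrightarrow> \<not> (\<sigma> u = 1 \<and> \<sigma> w = 2)"
    show "\<forall>u w. E u w \<longrightarrow> \<sigma> u = 0 \<or> \<sigma> w = 0 \<or> \<sigma> u = \<sigma> w"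
    proof (intro allI impI)
      fix u w
      assume "E u w"
      then have "E w u" "u \<in> V" "w \<in> V"
        using edge_sym edge_in_V by blast+
      then have "\<not> (\<sigma> u = 1 \<and> \<sigma> w = 2)" "\<not> (\<sigma> w = 1 \<and> \<sigma> u = 2)" "\<sigma> u \<in> {0, 1, 2}" "\<sigma> w \<in> {0, 1, 2}"
        using no_12 \<open>E u w\<close> that by blast+
      then show "\<sigma> u = 0 \<or> \<sigma> w = 0 \<or> \<sigma> u = \<sigma> w"
        by auto
    qed
  qed fastforce
  have "\<sigma> \<in> configs \<longleftrightarrow> \<sigma> \<in> extensional V \<and> (\<forall>u\<in>V. \<sigma> u \<in> {0, 1, 2}) \<and>
      (\<forall>u\<in>V. \<forall>w\<in>V. E u w \<longrightarrow> \<not> (\<sigma> u = 1 \<and> \<sigma> w = 2))"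
    by (auto simp: WR_configs_def PiE_iff)
  then show ?thesis
    unfolding colours using edges colours by blast
qed

lemma config_le_2: "\<sigma> \<in> configs \<Longrightarrow> u \<in> V \<Longrightarrow> \<sigma> u \<le> 2"
  and config_edge: "\<sigma> \<in> configs \<Longrightarrow> E u w \<Longrightarrow> \<sigma> u = 0 \<or> \<sigma> w = 0 \<or> \<sigma> u = \<sigma> w"
  by (simp_all add: in_configs_iff)

lemma finite_configs: "finite configs"
proof (rule finite_subset)
  show "configs \<subseteq> V \<rightarrow>\<^sub>E {0, 1, 2}"
    by (auto simp: WR_configs_def)
  show "finite (V \<rightarrow>\<^sub>E ({0, 1, 2} :: nat set))"
    using finite_V by (simp add: finite_PiE)
qed

lemma empty_config_in_configs: "restrict (\<lambda>_. 0) V \<in> configs"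
  by (simp add: in_configs_iff)

definition occ :: "('a \<Rightarrow> nat) \<Rightarrow> nat" where
  "occ \<sigma> = card {u\<in>V. \<sigma> u \<noteq> 0}"

lemma occupied_eq_occ:
  assumes "\<sigma> \<in> configs"
  shows "occupied V \<sigma> = occ \<sigma>"
proof -
  have "{u\<in>V. \<sigma> u \<noteq> 0} = {u\<in>V. \<sigma> u = 1} \<union> {u\<in>V. \<sigma> u = 2}"
    using assms by (force simp: in_configs_iff)
  then show ?thesis
    using finite_V by (simp add: occupied_def colour_count_def occ_def card_Un_disjoint disjoint_iff)
qed

definition nbrs_coloured :: "'a \<Rightarrow> nat \<Rightarrow> ('a \<Rightarrow> nat) \<Rightarrow> 'a set" where
  "nbrs_coloured v i \<sigma> = {u\<in>nbhd v. \<sigma> u = i}"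

definition nbr_occ :: "'a \<Rightarrow> ('a \<Rightarrow> nat) \<Rightarrow> nat" where
  "nbr_occ v \<sigma> = card {u\<in>nbhd v. \<sigma> u \<noteq> 0}"

lemma finite_nbrs_coloured: "finite (nbrs_coloured v i \<sigma>)"
  using finite_nbhd by (simp add: nbrs_coloured_def)

lemma nbr_occ_eq:
  assumes "\<sigma> \<in> configs"
  shows "nbr_occ v \<sigma> = card (nbrs_coloured v 1 \<sigma>) + card (nbrs_coloured v 2 \<sigma>)"
proof -
  have "{u\<in>nbhd v. \<sigma> u \<noteq> 0} = nbrs_coloured v 1 \<sigma> \<union> nbrs_coloured v 2 \<sigma>"
    using assms nbhd_subset by (force simp: in_configs_iff nbrs_coloured_def)
  then show ?thesis
    using card_Un_disjoint[OF finite_nbrs_coloured finite_nbrs_coloured]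
    by (simp add: nbr_occ_def disjoint_iff nbrs_coloured_def)
qed

definition paint :: "'a set \<Rightarrow> nat \<Rightarrow> ('a \<Rightarrow> nat) \<Rightarrow> 'a \<Rightarrow> nat" where
  "paint T i \<rho> = (\<lambda>u. if u \<in> T then i else \<rho> u)"

lemma paint_in_configs:
  assumes "\<rho> \<in> configs" "T \<subseteq> V" "i \<le> 2"
    and "\<forall>u\<in>T. \<forall>w. E u w \<longrightarrow> w \<in> T \<or> \<rho> w = 0 \<or> \<rho> w = i"
  shows "paint T i \<rho> \<in> configs"
  unfolding in_configs_iff
proof (intro conjI allI impI ballI)
  have "\<rho> \<in> extensional V" "\<forall>u\<in>V. \<rho> u \<le> 2"
    and \<rho>_edge: "\<And>u w. E u w \<Longrightarrow> \<rho> u = 0 \<or> \<rho> w = 0 \<or> \<rho> u = \<rho> w"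
    using assms(1) by (auto simp: in_configs_iff)
  then show "paint T i \<rho> \<in> extensional V" "\<And>u. u \<in> V \<Longrightarrow> paint T i \<rho> u \<le> 2"
    using assms(2,3) by (auto simp: paint_def extensional_def)
  fix u w
  assume "E u w"
  moreover have "u \<in> T \<Longrightarrow> w \<in> T \<or> \<rho> w = 0 \<or> \<rho> w = i" "w \<in> T \<Longrightarrow> u \<in> T \<or> \<rho> u = 0 \<or> \<rho> u = i"
    using assms(4) \<open>E u w\<close> edge_sym by blast+
  ultimately show "paint T i \<rho> u = 0 \<or> paint T i \<rho> w = 0 \<or> paint T i \<rho> u = paint T i \<rho> w"
    using \<rho>_edge[of u w] by (auto simp: paint_def)
qed

lemma paint_zero_in_configs:
  assumes "\<rho> \<in> configs" "T \<subseteq> V"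
  shows "paint T 0 \<rho> \<in> configs"
  using assms unfolding in_configs_iff paint_def extensional_def by auto

lemma occ_paint:
  assumes "T \<subseteq> V" "\<forall>u\<in>T. \<rho> u = 0" "i \<noteq> 0"
  shows "occ (paint T i \<rho>) = occ \<rho> + card T"
proof -
  have "{u\<in>V. paint T i \<rho> u \<noteq> 0} = {u\<in>V. \<rho> u \<noteq> 0} \<union> T"
    using assms by (auto simp: paint_def)
  moreover have "{u\<in>V. \<rho> u \<noteq> 0} \<inter> T = {}"
    using assms by auto
  ultimately show ?thesis
    using finite_V assms(1) by (simp add: occ_def card_Un_disjoint finite_subset)
qed

lemma paint_singleton: "paint {v} k \<rho> = \<rho>(v := k)"
  by (auto simp: paint_def)

lemma nbrs_coloured_paint:
  assumes "T \<subseteq> nbhd v"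
  shows "nbrs_coloured v j (paint T i \<rho>) =
    (if j = i then T \<union> nbrs_coloured v j \<rho> else nbrs_coloured v j \<rho> - T)"
  using assms by (auto simp: nbrs_coloured_def paint_def)

lemma sum_configs_coloured_at:
  assumes "v \<in> V" "k \<in> {1, 2}"
  shows "(\<Sum>\<sigma>\<in>{\<sigma>\<in>configs. \<sigma> v = k}. h \<sigma>) =
    (\<Sum>\<rho>\<in>{\<rho>\<in>configs. \<rho> v = 0}. if nbrs_coloured v (3 - k) \<rho> = {} then h (\<rho>(v := k)) else 0)"
proof -
  have "bij_betw (\<lambda>\<rho>. \<rho>(v := k))
      {\<rho>\<in>configs. \<rho> v = 0 \<and> nbrs_coloured v (3 - k) \<rho> = {}} {\<sigma>\<in>configs. \<sigma> v = k}"
  proof (rule bij_betw_byWitness[where f' = "\<lambda>\<sigma>. \<sigma>(v := 0)"])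
    show "(\<lambda>\<rho>. \<rho>(v := k)) ` {\<rho>\<in>configs. \<rho> v = 0 \<and> nbrs_coloured v (3 - k) \<rho> = {}}
        \<subseteq> {\<sigma>\<in>configs. \<sigma> v = k}"
    proof (rule image_subsetI)
      fix \<rho>
      assume "\<rho> \<in> {\<rho>\<in>configs. \<rho> v = 0 \<and> nbrs_coloured v (3 - k) \<rho> = {}}"
      then have "\<rho> \<in> configs" "\<rho> v = 0" "nbrs_coloured v (3 - k) \<rho> = {}"
        by auto
      then have "\<forall>w. E v w \<longrightarrow> w \<in> {v} \<or> \<rho> w = 0 \<or> \<rho> w = k"
        using assms(2) edge_in_V by (fastforce simp: in_configs_iff nbrs_coloured_def in_nbhd_iff)
      then show "\<rho>(v := k) \<in> {\<sigma>\<in>configs. \<sigma> v = k}"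
        using paint_in_configs[of \<rho> "{v}" k] \<open>\<rho> \<in> configs\<close> assms by (auto simp: paint_singleton)
    qed
    show "(\<lambda>\<sigma>. \<sigma>(v := 0)) ` {\<sigma>\<in>configs. \<sigma> v = k}
        \<subseteq> {\<rho>\<in>configs. \<rho> v = 0 \<and> nbrs_coloured v (3 - k) \<rho> = {}}"
    proof (rule image_subsetI)
      fix \<sigma>
      assume "\<sigma> \<in> {\<sigma>\<in>configs. \<sigma> v = k}"
      then have "\<sigma> \<in> configs" "\<sigma> v = k"
        by auto
      then have "\<sigma> u \<noteq> 3 - k" if "E v u" for u
        using config_edge[OF \<open>\<sigma> \<in> configs\<close> that] assms(2) by auto
      then show "\<sigma>(v := 0) \<in> {\<rho>\<in>configs. \<rho> v = 0 \<and> nbrs_coloured v (3 - k) \<rho> = {}}"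
        using paint_zero_in_configs[of \<sigma> "{v}"] \<open>\<sigma> \<in> configs\<close> assms(1) not_in_nbhd
        by (auto simp: paint_singleton nbrs_coloured_def in_nbhd_iff)
    qed
  qed auto
  then have "(\<Sum>\<sigma>\<in>{\<sigma>\<in>configs. \<sigma> v = k}. h \<sigma>) =
      (\<Sum>\<rho>\<in>{\<rho>\<in>{\<rho>\<in>configs. \<rho> v = 0}. nbrs_coloured v (3 - k) \<rho> = {}}. h (\<rho>(v := k)))"
    by (simp add: sum.reindex_bij_betw[symmetric])
  also have "\<dots> = (\<Sum>\<rho>\<in>{\<rho>\<in>configs. \<rho> v = 0}.
      if nbrs_coloured v (3 - k) \<rho> = {} then h (\<rho>(v := k)) else 0)"
    by (rule sum.inter_filter) (simp add: finite_configs)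
  finally show ?thesis .
qed

lemma sum_configs_split_at:
  assumes "v \<in> V"
  shows "(\<Sum>\<sigma>\<in>configs. h \<sigma>) = (\<Sum>\<rho>\<in>{\<rho>\<in>configs. \<rho> v = 0}. h \<rho>
      + (if nbrs_coloured v 2 \<rho> = {} then h (\<rho>(v := 1)) else 0)
      + (if nbrs_coloured v 1 \<rho> = {} then h (\<rho>(v := 2)) else 0))"
proof -
  have "(\<Sum>\<sigma>\<in>configs. h \<sigma>) = (\<Sum>\<sigma>\<in>configs.
      (if \<sigma> v = 0 then h \<sigma> else 0) + (if \<sigma> v = 1 then h \<sigma> else 0) + (if \<sigma> v = 2 then h \<sigma> else 0))"
  proof (rule sum.cong)
    fix \<sigma>
    assume "\<sigma> \<in> configs"
    then have "\<sigma> v \<le> 2"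
      using assms by (rule config_le_2)
    then show "h \<sigma> = (if \<sigma> v = 0 then h \<sigma> else 0) + (if \<sigma> v = 1 then h \<sigma> else 0)
        + (if \<sigma> v = 2 then h \<sigma> else 0)"
      by auto
  qed simp
  also have "\<dots> = (\<Sum>\<rho>\<in>{\<rho>\<in>configs. \<rho> v = 0}. h \<rho>)
      + (\<Sum>\<sigma>\<in>{\<sigma>\<in>configs. \<sigma> v = 1}. h \<sigma>) + (\<Sum>\<sigma>\<in>{\<sigma>\<in>configs. \<sigma> v = 2}. h \<sigma>)"
    using finite_configs by (simp add: sum.distrib sum.inter_filter)
  finally show ?thesis
    using sum_configs_coloured_at[OF assms, of 1 h] sum_configs_coloured_at[OF assms, of 2 h]
    by (simp add: sum.distrib)
qed

text \<open>For a colour \<open>i \<in> {1, 2}\<close>, \<open>3 - i\<close> is the other colour.\<close>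

definition free_nbrs :: "'a \<Rightarrow> nat \<Rightarrow> ('a \<Rightarrow> nat) \<Rightarrow> 'a set" where
  "free_nbrs v i \<rho> = {u\<in>nbhd v. \<rho> u = 0 \<and> (\<forall>w. E u w \<longrightarrow> \<rho> w \<noteq> 3 - i)}"

lemma free_nbrs_subset: "free_nbrs v i \<rho> \<subseteq> nbhd v"
  by (auto simp: free_nbrs_def)

lemma finite_free_nbrs: "finite (free_nbrs v i \<rho>)"
  using finite_nbhd free_nbrs_subset by (rule finite_subset[rotated])

lemma free_nbrs_clique_rival:
  assumes "i \<in> {1, 2}" and clique: "\<forall>a\<in>nbhd v. \<forall>b\<in>nbhd v. a \<noteq> b \<longrightarrow> E a b"
    and "nbrs_coloured v (3 - i) \<rho> \<noteq> {}"
  shows "free_nbrs v i \<rho> = {}"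
proof (rule equals0I)
  obtain w where "w \<in> nbhd v" "\<rho> w = 3 - i"
    using assms(3) by (auto simp: nbrs_coloured_def)
  fix u
  assume "u \<in> free_nbrs v i \<rho>"
  then have "u \<in> nbhd v" "\<rho> u = 0" "\<not> E u w"
    using \<open>\<rho> w = 3 - i\<close> by (auto simp: free_nbrs_def)
  moreover have "u \<noteq> w"
    using \<open>\<rho> u = 0\<close> \<open>\<rho> w = 3 - i\<close> assms(1) by auto
  ultimately show False
    using clique \<open>w \<in> nbhd v\<close> by blast
qed

definition bases :: "'a \<Rightarrow> nat \<Rightarrow> ('a \<Rightarrow> nat) set" where
  "bases v i = {\<rho>\<in>configs. \<rho> v = 0 \<and> nbrs_coloured v i \<rho> = {}}"

lemma paint_free_nbrs:
  assumes "i \<in> {1, 2}" "\<rho> \<in> bases v i" "T \<subseteq> free_nbrs v i \<rho>"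
  shows "paint T i \<rho> \<in> configs" "paint T i \<rho> v = 0" "nbrs_coloured v i (paint T i \<rho>) = T"
proof -
  have "\<rho> \<in> configs" "\<rho> v = 0" "nbrs_coloured v i \<rho> = {}" "T \<subseteq> nbhd v"
    using assms(2,3) free_nbrs_subset[of v i \<rho>] by (auto simp: bases_def)
  have "\<forall>u\<in>T. \<forall>w. E u w \<longrightarrow> w \<in> T \<or> \<rho> w = 0 \<or> \<rho> w = i"
  proof (intro ballI allI impI)
    fix u w
    assume "u \<in> T" "E u w"
    have "\<rho> w \<le> 2"
      using config_le_2[OF \<open>\<rho> \<in> configs\<close>] \<open>E u w\<close> edge_in_V by blast
    moreover have "\<rho> w \<noteq> 3 - i"
      using assms(3) \<open>u \<in> T\<close> \<open>E u w\<close> by (auto simp: free_nbrs_def)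
    ultimately show "w \<in> T \<or> \<rho> w = 0 \<or> \<rho> w = i"
      using assms(1) by auto
  qed
  then show "paint T i \<rho> \<in> configs"
    using paint_in_configs[OF \<open>\<rho> \<in> configs\<close>] \<open>T \<subseteq> nbhd v\<close> nbhd_subset assms(1) by fastforce
  show "paint T i \<rho> v = 0"
    using \<open>T \<subseteq> nbhd v\<close> \<open>\<rho> v = 0\<close> not_in_nbhd by (auto simp: paint_def)
  show "nbrs_coloured v i (paint T i \<rho>) = T"
    using \<open>T \<subseteq> nbhd v\<close> \<open>nbrs_coloured v i \<rho> = {}\<close> by (simp add: nbrs_coloured_paint)
qed

lemma erase_nbrs_coloured:
  assumes "i \<in> {1, 2}" "\<sigma> \<in> configs" "\<sigma> v = 0"
  shows "paint (nbrs_coloured v i \<sigma>) 0 \<sigma> \<in> bases v i"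
    and "nbrs_coloured v i \<sigma> \<subseteq> free_nbrs v i (paint (nbrs_coloured v i \<sigma>) 0 \<sigma>)"
proof -
  let ?T = "nbrs_coloured v i \<sigma>"
  show "paint ?T 0 \<sigma> \<in> bases v i"
    using paint_zero_in_configs[of \<sigma> ?T] assms nbhd_subset
    by (auto simp: bases_def paint_def nbrs_coloured_def)
  show "?T \<subseteq> free_nbrs v i (paint ?T 0 \<sigma>)"
  proof
    fix u
    assume "u \<in> ?T"
    then have "E v u" "\<sigma> u = i"
      by (auto simp: nbrs_coloured_def in_nbhd_iff)
    moreover have "\<sigma> w \<noteq> 3 - i" if "E u w" for w
      using config_edge[OF assms(2) that] \<open>\<sigma> u = i\<close> assms(1) by auto
    ultimately show "u \<in> free_nbrs v i (paint ?T 0 \<sigma>)"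
      using assms(1) \<open>u \<in> ?T\<close> by (auto simp: free_nbrs_def paint_def in_nbhd_iff)
  qed
qed

lemma bij_betw_paint_nbrs:
  assumes "i \<in> {1, 2}"
  shows "bij_betw (\<lambda>(\<rho>, T). paint T i \<rho>) (SIGMA \<rho>:bases v i. Pow (free_nbrs v i \<rho>) - {{}})
    {\<sigma>\<in>configs. \<sigma> v = 0 \<and> nbrs_coloured v i \<sigma> \<noteq> {}}"
    (is "bij_betw ?paint ?B ?C")
proof (rule bij_betw_byWitness[where f' = "\<lambda>\<sigma>. (paint (nbrs_coloured v i \<sigma>) 0 \<sigma>, nbrs_coloured v i \<sigma>)"])
  show "\<forall>\<sigma>\<in>?C. ?paint (paint (nbrs_coloured v i \<sigma>) 0 \<sigma>, nbrs_coloured v i \<sigma>) = \<sigma>"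
    by (auto simp: paint_def nbrs_coloured_def)
  show "\<forall>x\<in>?B. (paint (nbrs_coloured v i (?paint x)) 0 (?paint x), nbrs_coloured v i (?paint x)) = x"
  proof
    fix x
    assume "x \<in> ?B"
    then obtain \<rho> T where x: "x = (\<rho>, T)" "\<rho> \<in> bases v i" "T \<subseteq> free_nbrs v i \<rho>"
      by auto
    then have "paint T 0 (paint T i \<rho>) = \<rho>"
      by (force simp: paint_def free_nbrs_def fun_eq_iff)
    then show "(paint (nbrs_coloured v i (?paint x)) 0 (?paint x), nbrs_coloured v i (?paint x)) = x"
      using paint_free_nbrs(3)[OF assms x(2,3)] x(1) by simp
  qed
  show "?paint ` ?B \<subseteq> ?C"
    using paint_free_nbrs[OF assms] by auto
  show "(\<lambda>\<sigma>. (paint (nbrs_coloured v i \<sigma>) 0 \<sigma>, nbrs_coloured v i \<sigma>)) ` ?C \<subseteq> ?B"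
    using erase_nbrs_coloured[OF assms] by blast
qed

definition nbhds_cliques :: bool where
  "nbhds_cliques \<longleftrightarrow> (\<forall>v\<in>V. \<forall>a\<in>nbhd v. \<forall>b\<in>nbhd v. a \<noteq> b \<longrightarrow> E a b)"

lemma nbhds_cliques_if_disjoint_union_of_cliques:
  assumes "disjoint_union_of_cliques V E d"
  shows nbhds_cliques
proof -
  from assms obtain P where "partition_on V P \<and> (\<forall>B\<in>P. card B = d + 1) \<and>
      (\<forall>u\<in>V. \<forall>w\<in>V. E u w \<longleftrightarrow> u \<noteq> w \<and> (\<exists>B\<in>P. u \<in> B \<and> w \<in> B))"
    unfolding disjoint_union_of_cliques_def by (rule exE)
  then have "partition_on V P"
    and adj: "\<forall>u\<in>V. \<forall>w\<in>V. E u w \<longleftrightarrow> u \<noteq> w \<and> (\<exists>B\<in>P. u \<in> B \<and> w \<in> B)"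
    by simp_all
  show ?thesis
    unfolding nbhds_cliques_def
  proof (intro ballI impI)
    fix v a b
    assume "v \<in> V" "a \<in> nbhd v" "b \<in> nbhd v" "a \<noteq> b"
    then have "a \<in> V" "b \<in> V" "E v a" "E v b"
      using nbhd_subset by (blast, blast, simp_all add: in_nbhd_iff)
    have "\<exists>A\<in>P. v \<in> A \<and> a \<in> A" "\<exists>B\<in>P. v \<in> B \<and> b \<in> B"
      using adj \<open>v \<in> V\<close> \<open>a \<in> V\<close> \<open>b \<in> V\<close> \<open>E v a\<close> \<open>E v b\<close> by simp_all
    then obtain A B where "A \<in> P" "v \<in> A" "a \<in> A" "B \<in> P" "v \<in> B" "b \<in> B"
      by blast
    then have "A = B"
      using disjointD[OF partition_onD2[OF \<open>partition_on V P\<close>], of A B] by blast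
    then show "E a b"
      using adj \<open>a \<in> V\<close> \<open>b \<in> V\<close> \<open>a \<noteq> b\<close> \<open>B \<in> P\<close> \<open>a \<in> A\<close> \<open>b \<in> B\<close> by auto
  qed
qed

end

locale regular_graph = finite_simple_graph +
  fixes d :: nat
  assumes regular: "regular V E d"
begin

lemma card_nbhd: "v \<in> V \<Longrightarrow> card (nbhd v) = d"
  using regular by (simp add: regular_def nbhd_def)

lemma sum_nbr_occ: "(\<Sum>v\<in>V. nbr_occ v \<sigma>) = d * occ \<sigma>"
proof -
  have "(\<Sum>v\<in>V. nbr_occ v \<sigma>) = (\<Sum>v\<in>V. \<Sum>u\<in>{u\<in>V. E v u \<and> \<sigma> u \<noteq> 0}. 1)"
    by (simp add: nbr_occ_def nbhd_def)
  also have "\<dots> = (\<Sum>u\<in>V. \<Sum>v\<in>{v\<in>V. E v u \<and> \<sigma> u \<noteq> 0}. 1)"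
    by (rule sum.swap_restrict[OF finite_V finite_V])
  also have "\<dots> = (\<Sum>u\<in>V. if \<sigma> u \<noteq> 0 then d else 0)"
  proof (rule sum.cong)
    fix u
    assume "u \<in> V"
    have "{v\<in>V. E v u} = nbhd u"
      unfolding nbhd_def using edge_sym by blast
    then show "(\<Sum>v\<in>{v\<in>V. E v u \<and> \<sigma> u \<noteq> 0}. 1) = (if \<sigma> u \<noteq> 0 then d else 0)"
      using card_nbhd[OF \<open>u \<in> V\<close>] by simp
  qed simp
  also have "\<dots> = d * occ \<sigma>"
    using finite_V by (simp add: sum.If_cases occ_def Int_def)
  finally show ?thesis .
qed

lemma closed_nbhd_eq:
  assumes "v \<in> V" and clique: "\<forall>a\<in>nbhd v. \<forall>b\<in>nbhd v. a \<noteq> b \<longrightarrow> E a b"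
    and "u \<in> insert v (nbhd v)"
  shows "insert u (nbhd u) = insert v (nbhd v)"
proof (cases "u = v")
  case False
  then have "u \<in> nbhd v" "u \<in> V"
    using assms(3) nbhd_subset by auto
  have "E u v"
    using \<open>u \<in> nbhd v\<close> edge_sym[of v u] by (simp add: in_nbhd_iff)
  have sub: "insert v (nbhd v) \<subseteq> insert u (nbhd u)"
  proof
    fix x
    assume "x \<in> insert v (nbhd v)"
    moreover have "E u x" if "x \<in> nbhd v" "x \<noteq> u"
      using clique[rule_format, OF \<open>u \<in> nbhd v\<close> that(1)] that(2) by auto
    ultimately show "x \<in> insert u (nbhd u)"
      using \<open>E u v\<close> by (auto simp: in_nbhd_iff)
  qed
  have "card (insert v (nbhd v)) = card (insert u (nbhd u))"
    using card_nbhd[OF \<open>v \<in> V\<close>] card_nbhd[OF \<open>u \<in> V\<close>] not_in_nbhd finite_nbhd by simp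
  then show ?thesis
    using card_subset_eq[OF _ sub] finite_nbhd by simp
qed simp

lemma free_nbrs_clique_no_rival:
  assumes "v \<in> V" "i \<in> {1, 2}" and clique: "\<forall>a\<in>nbhd v. \<forall>b\<in>nbhd v. a \<noteq> b \<longrightarrow> E a b"
    and "\<rho> \<in> bases v i" "nbrs_coloured v (3 - i) \<rho> = {}"
  shows "free_nbrs v i \<rho> = nbhd v"
proof -
  have nbr_zero: "\<rho> u = 0" if "u \<in> nbhd v" for u
  proof -
    have "\<rho> u \<le> 2"
      using assms(4) that nbhd_subset config_le_2 by (auto simp: bases_def)
    moreover have "\<rho> u \<noteq> i" "\<rho> u \<noteq> 3 - i"
      using assms(4,5) that by (auto simp: bases_def nbrs_coloured_def)
    ultimately show ?thesis
      using assms(2) by auto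
  qed
  have "\<rho> v = 0"
    using assms(4) by (simp add: bases_def)
  have "nbhd v \<subseteq> free_nbrs v i \<rho>"
  proof
    fix u
    assume "u \<in> nbhd v"
    have "\<rho> w = 0" if "E u w" for w
    proof -
      have "w \<in> insert v (nbhd v)"
        using closed_nbhd_eq[OF assms(1) clique, of u] \<open>u \<in> nbhd v\<close> that by (auto simp: in_nbhd_iff)
      then show ?thesis
        using \<open>\<rho> v = 0\<close> nbr_zero by auto
    qed
    then show "u \<in> free_nbrs v i \<rho>"
      using \<open>u \<in> nbhd v\<close> nbr_zero assms(2) by (auto simp: free_nbrs_def)
  qed
  then show ?thesis
    using free_nbrs_subset by (simp add: subset_antisym)
qed

lemma partition_on_closed_nbhds:
  assumes nbhds_cliques
  shows "partition_on V ((\<lambda>v. insert v (nbhd v)) ` V)"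
proof (rule partition_onI)
  show "\<Union>((\<lambda>v. insert v (nbhd v)) ` V) = V"
    using nbhd_subset by auto
  fix A B
  assume "A \<in> (\<lambda>v. insert v (nbhd v)) ` V" "B \<in> (\<lambda>v. insert v (nbhd v)) ` V" "A \<noteq> B"
  then obtain a b where "a \<in> V" "A = insert a (nbhd a)" "b \<in> V" "B = insert b (nbhd b)"
    by auto
  show "disjnt A B"
    unfolding disjnt_def
  proof (rule ccontr)
    assume "A \<inter> B \<noteq> {}"
    then obtain x where "x \<in> A" "x \<in> B"
      by blast
    then have "A = insert x (nbhd x)" "B = insert x (nbhd x)"
      using closed_nbhd_eq[of a x] closed_nbhd_eq[of b x] assms \<open>a \<in> V\<close> \<open>b \<in> V\<close> \<open>A = _\<close> \<open>B = _\<close>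
      by (simp_all add: nbhds_cliques_def)
    then show False
      using \<open>A \<noteq> B\<close> by simp
  qed
qed auto

lemma disjoint_union_of_cliques_if_nbhds_cliques:
  assumes nbhds_cliques
  shows "disjoint_union_of_cliques V E d"
proof -
  define P where "P = (\<lambda>v. insert v (nbhd v)) ` V"
  have "partition_on V P"
    using partition_on_closed_nbhds[OF assms] by (simp add: P_def)
  moreover have "\<forall>B\<in>P. card B = d + 1"
    using card_nbhd finite_nbhd not_in_nbhd by (auto simp: P_def)
  moreover have "\<forall>u\<in>V. \<forall>w\<in>V. E u w \<longleftrightarrow> u \<noteq> w \<and> (\<exists>B\<in>P. u \<in> B \<and> w \<in> B)"
  proof (intro ballI iffI)
    fix u w
    assume "u \<in> V" "E u w"
    then have "u \<noteq> w" "u \<in> insert u (nbhd u)" "w \<in> insert u (nbhd u)"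
      using no_loop by (auto simp: in_nbhd_iff)
    then show "u \<noteq> w \<and> (\<exists>B\<in>P. u \<in> B \<and> w \<in> B)"
      using \<open>u \<in> V\<close> by (auto simp: P_def)
  next
    fix u w
    assume "u \<noteq> w \<and> (\<exists>B\<in>P. u \<in> B \<and> w \<in> B)"
    then obtain v where "v \<in> V" "u \<in> insert v (nbhd v)" "w \<in> insert v (nbhd v)" "u \<noteq> w"
      by (auto simp: P_def)
    then have "w \<in> insert u (nbhd u)"
      using closed_nbhd_eq[of v u] assms by (simp add: nbhds_cliques_def)
    then show "E u w"
      using \<open>u \<noteq> w\<close> by (simp add: in_nbhd_iff)
  qed
  ultimately show ?thesis
    unfolding disjoint_union_of_cliques_def by (intro exI[of _ P] conjI)
qed

lemma nbhds_cliques_iff_disjoint_union_of_cliques: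
  "nbhds_cliques \<longleftrightarrow> disjoint_union_of_cliques V E d"
  using disjoint_union_of_cliques_if_nbhds_cliques nbhds_cliques_if_disjoint_union_of_cliques by blast

end

locale wr_model = regular_graph +
  fixes lam :: real
  assumes lam_pos: "0 < lam"
begin

definition q :: real where
  "q = (1 + lam) ^ d"

text \<open>For \<open>d = 0\<close> division by zero gives \<open>slope = 0\<close>; harmless, as no vertex has a neighbour.\<close>

definition slope :: real where
  "slope = (q - 1) / d"

text \<open>This is \<open>2 (1 + lam) ^ (d + 1) - 1\<close>, the partition function of \<open>K\<^sub>d\<^sub>+\<^sub>1\<close>.\<close>

definition Z_clique :: real where
  "Z_clique = (1 + 2 * lam) * q + slope * d"

definition Z :: real where
  "Z = (\<Sum>\<sigma>\<in>configs. lam ^ occ \<sigma>)"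

definition occ_moment :: real where
  "occ_moment = (\<Sum>\<sigma>\<in>configs. occ \<sigma> * lam ^ occ \<sigma>)"

text \<open>The coefficients are chosen so that \<open>local_weight v\<close> sums to \<open>Z_clique * occ_moment\<close> over
  \<open>v\<close>, and at the same time equals \<open>2 * lam * q * Z\<close> minus the two defects of \<open>v\<close>.\<close>

definition local_weight :: "'a \<Rightarrow> real" where
  "local_weight v = (\<Sum>\<sigma>\<in>configs.
     lam ^ occ \<sigma> * ((1 + 2 * lam) * q * (if \<sigma> v \<noteq> 0 then 1 else 0) + slope * nbr_occ v \<sigma>))"

definition defect :: "'a \<Rightarrow> nat \<Rightarrow> real" where
  "defect v i = (\<Sum>\<sigma>\<in>{\<sigma>\<in>configs. \<sigma> v = 0 \<and> nbrs_coloured v i \<sigma> \<noteq> {}}. lam ^ occ \<sigma> *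
     (lam * q - slope * card (nbrs_coloured v i \<sigma>)
       - (if nbrs_coloured v (3 - i) \<sigma> = {} then lam * slope * card (nbrs_coloured v i \<sigma>) else 0)))"

definition total_defect :: real where
  "total_defect = (\<Sum>v\<in>V. defect v 1 + defect v 2)"

definition completion_weight :: "'a \<Rightarrow> nat \<Rightarrow> ('a \<Rightarrow> nat) \<Rightarrow> real" where
  "completion_weight v i \<rho> = (\<Sum>T\<in>Pow (free_nbrs v i \<rho>) - {{}}. lam ^ card T *
     (lam * q - slope * card T - (if nbrs_coloured v (3 - i) \<rho> = {} then lam * slope * card T else 0)))"

definition min_completion_weight :: "nat \<Rightarrow> real" where
  "min_completion_weight n = lam * (q * ((1 + lam) ^ n - 1) - slope * n * (1 + lam) ^ n)"

lemma q_ge_1: "1 \<le> q"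
  using lam_pos by (simp add: q_def)

lemma slope_nonneg: "0 \<le> slope"
  using q_ge_1 by (simp add: slope_def)

lemma slope_pos: "0 < d \<Longrightarrow> 0 < slope"
  using lam_pos by (simp add: slope_def q_def)

lemma min_completion_weight_nonneg:
  assumes "n \<le> d"
  shows "0 \<le> min_completion_weight n"
  unfolding min_completion_weight_def
proof (cases "d = 0")
  case True
  then show "0 \<le> lam * (q * ((1 + lam) ^ n - 1) - slope * n * (1 + lam) ^ n)"
    using assms by simp
next
  case False
  have "n * (q - 1) * (1 + lam) ^ n \<le> d * q * ((1 + lam) ^ n - 1)"
    using power_minus_one_ratio_le[of "1 + lam" n d] lam_pos assms by (simp add: q_def)
  then have "slope * n * (1 + lam) ^ n \<le> q * ((1 + lam) ^ n - 1)"
    using False by (simp add: slope_def field_simps)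
  then show "0 \<le> lam * (q * ((1 + lam) ^ n - 1) - slope * n * (1 + lam) ^ n)"
    using lam_pos by simp
qed

lemma min_completion_weight_degree: "min_completion_weight d = 0"
  unfolding min_completion_weight_def slope_def q_def by (cases "d = 0") simp_all

lemma min_completion_weight_eq_sum:
  "min_completion_weight (card (free_nbrs v i \<rho>)) =
    (\<Sum>T\<in>Pow (free_nbrs v i \<rho>) - {{}}. lam ^ card T * (lam * q - (1 + lam) * slope * card T))"
  using sum_Pow_nonempty_eq[OF finite_free_nbrs] by (simp add: min_completion_weight_def)

lemma completion_weight_eq_min:
  assumes "nbrs_coloured v (3 - i) \<rho> = {}"
  shows "completion_weight v i \<rho> = min_completion_weight (card (free_nbrs v i \<rho>))"
  unfolding min_completion_weight_eq_sum completion_weight_def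
  using assms by (intro sum.cong) (simp_all add: algebra_simps)

lemma completion_weight_ge_min:
  "min_completion_weight (card (free_nbrs v i \<rho>)) \<le> completion_weight v i \<rho>"
  unfolding min_completion_weight_eq_sum completion_weight_def
proof (rule sum_mono)
  fix T :: "'a set"
  have "lam * q - (1 + lam) * slope * card T
      \<le> lam * q - slope * card T - (if nbrs_coloured v (3 - i) \<rho> = {} then lam * slope * card T else 0)"
    using lam_pos slope_nonneg by (simp add: algebra_simps)
  then show "lam ^ card T * (lam * q - (1 + lam) * slope * card T)
      \<le> lam ^ card T * (lam * q - slope * card T
          - (if nbrs_coloured v (3 - i) \<rho> = {} then lam * slope * card T else 0))"
    using lam_pos by (intro mult_left_mono) simp_all
qed

lemma completion_weight_gt_min:
  assumes "nbrs_coloured v (3 - i) \<rho> \<noteq> {}" "free_nbrs v i \<rho> \<noteq> {}" "0 < d"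
  shows "min_completion_weight (card (free_nbrs v i \<rho>)) < completion_weight v i \<rho>"
  unfolding min_completion_weight_eq_sum completion_weight_def
proof (rule sum_strict_mono)
  show "finite (Pow (free_nbrs v i \<rho>) - {{}})" "Pow (free_nbrs v i \<rho>) - {{}} \<noteq> {}"
    using finite_free_nbrs assms(2) by auto
  fix T :: "'a set"
  assume "T \<in> Pow (free_nbrs v i \<rho>) - {{}}"
  then have "0 < card T"
    using finite_free_nbrs finite_subset card_gt_0_iff by blast
  then have "lam * q - (1 + lam) * slope * card T < lam * q - slope * card T"
    using lam_pos slope_pos[OF assms(3)] by (simp add: algebra_simps)
  then show "lam ^ card T * (lam * q - (1 + lam) * slope * card T)
      < lam ^ card T * (lam * q - slope * card T
          - (if nbrs_coloured v (3 - i) \<rho> = {} then lam * slope * card T else 0))"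
    using lam_pos assms(1) by simp
qed

lemma card_free_nbrs_le: "v \<in> V \<Longrightarrow> card (free_nbrs v i \<rho>) \<le> d"
  using card_mono[OF finite_nbhd free_nbrs_subset] card_nbhd by metis

lemma completion_weight_nonneg: "v \<in> V \<Longrightarrow> 0 \<le> completion_weight v i \<rho>"
  using min_completion_weight_nonneg[OF card_free_nbrs_le] completion_weight_ge_min order_trans by blast

lemma defect_eq_sum_completion_weight:
  assumes "i \<in> {1, 2}"
  shows "defect v i = (\<Sum>\<rho>\<in>bases v i. lam ^ occ \<rho> * completion_weight v i \<rho>)"
proof -
  define g where "g \<sigma> = lam ^ occ \<sigma> * (lam * q - slope * card (nbrs_coloured v i \<sigma>)
    - (if nbrs_coloured v (3 - i) \<sigma> = {} then lam * slope * card (nbrs_coloured v i \<sigma>) else 0))" for \<sigma>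
  define h where "h \<rho> T = lam ^ card T * (lam * q - slope * card T
    - (if nbrs_coloured v (3 - i) \<rho> = {} then lam * slope * card T else 0))" for \<rho> and T :: "'a set"
  have weight: "g (paint T i \<rho>) = lam ^ occ \<rho> * h \<rho> T"
    if "\<rho> \<in> bases v i" "T \<subseteq> free_nbrs v i \<rho>" for \<rho> T
  proof -
    have "T \<subseteq> nbhd v" "T \<subseteq> V" "\<forall>u\<in>T. \<rho> u = 0"
      using that(2) free_nbrs_subset[of v i \<rho>] nbhd_subset by (auto simp: free_nbrs_def)
    moreover have "3 - i \<noteq> i" "nbrs_coloured v i \<rho> = {}"
      using assms that(1) by (auto simp: bases_def)
    moreover have "nbrs_coloured v (3 - i) \<rho> - T = nbrs_coloured v (3 - i) \<rho>"
      using \<open>\<forall>u\<in>T. \<rho> u = 0\<close> assms by (auto simp: nbrs_coloured_def)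
    moreover have "occ (paint T i \<rho>) = occ \<rho> + card T"
      using occ_paint \<open>T \<subseteq> V\<close> \<open>\<forall>u\<in>T. \<rho> u = 0\<close> assms by auto
    ultimately show ?thesis
      by (simp add: g_def h_def nbrs_coloured_paint power_add)
  qed
  have "defect v i = sum g {\<sigma>\<in>configs. \<sigma> v = 0 \<and> nbrs_coloured v i \<sigma> \<noteq> {}}"
    by (simp add: defect_def g_def)
  also have "\<dots> = (\<Sum>x\<in>(SIGMA \<rho>:bases v i. Pow (free_nbrs v i \<rho>) - {{}}). g ((\<lambda>(\<rho>, T). paint T i \<rho>) x))"
    by (rule sum.reindex_bij_betw[OF bij_betw_paint_nbrs[OF assms], symmetric])
  also have "\<dots> = (\<Sum>(\<rho>, T)\<in>(SIGMA \<rho>:bases v i. Pow (free_nbrs v i \<rho>) - {{}}). lam ^ occ \<rho> * h \<rho> T)"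
    by (rule sum.cong) (auto simp: weight)
  also have "\<dots> = (\<Sum>\<rho>\<in>bases v i. lam ^ occ \<rho> * completion_weight v i \<rho>)"
    using finite_configs finite_free_nbrs
    by (subst sum.Sigma[symmetric]) (auto simp: bases_def completion_weight_def h_def sum_distrib_left)
  finally show ?thesis .
qed

lemma defect_nonneg: "v \<in> V \<Longrightarrow> i \<in> {1, 2} \<Longrightarrow> 0 \<le> defect v i"
  unfolding defect_eq_sum_completion_weight
  using completion_weight_nonneg lam_pos by (intro sum_nonneg) simp

lemma defect_pos:
  assumes "v \<in> V" "a \<in> nbhd v" "b \<in> nbhd v" "a \<noteq> b" "\<not> E a b"
  shows "0 < defect v 1"
proof -
  define \<rho> :: "'a \<Rightarrow> nat" where "\<rho> = (restrict (\<lambda>_. 0) V)(b := 2)"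
  have "a \<in> V" "b \<in> V" "v \<noteq> b"
    using assms nbhd_subset not_in_nbhd by auto
  have "\<rho> \<in> configs"
    unfolding \<rho>_def paint_singleton[symmetric]
    using \<open>b \<in> V\<close> edge_in_V by (intro paint_in_configs empty_config_in_configs) auto
  moreover have "\<rho> v = 0" "nbrs_coloured v 1 \<rho> = {}"
    using \<open>v \<noteq> b\<close> assms(1) nbhd_subset by (auto simp: \<rho>_def nbrs_coloured_def)
  ultimately have "\<rho> \<in> bases v 1"
    by (simp add: bases_def)
  have "nbrs_coloured v 2 \<rho> \<noteq> {}"
    using assms(3) by (auto simp: \<rho>_def nbrs_coloured_def)
  moreover have "a \<in> free_nbrs v 1 \<rho>"
    using assms(2,4,5) \<open>a \<in> V\<close> edge_in_V by (auto simp: \<rho>_def free_nbrs_def)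
  moreover have "0 < d"
    using card_nbhd[OF assms(1)] assms(2) finite_nbhd card_gt_0_iff by blast
  ultimately have "min_completion_weight (card (free_nbrs v 1 \<rho>)) < completion_weight v 1 \<rho>"
    using completion_weight_gt_min[of v 1 \<rho>] by auto
  then have "0 < completion_weight v 1 \<rho>"
    using min_completion_weight_nonneg[OF card_free_nbrs_le[OF assms(1)], of 1 \<rho>] by linarith
  then have "0 < (\<Sum>\<rho>\<in>bases v 1. lam ^ occ \<rho> * completion_weight v 1 \<rho>)"
    using \<open>\<rho> \<in> bases v 1\<close> finite_configs completion_weight_nonneg[OF assms(1)] lam_pos
    by (intro sum_pos2[of _ \<rho>]) (auto simp: bases_def)
  then show ?thesis
    by (simp add: defect_eq_sum_completion_weight)
qed

lemma defect_eq_0: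
  assumes "v \<in> V" "i \<in> {1, 2}" and clique: "\<forall>a\<in>nbhd v. \<forall>b\<in>nbhd v. a \<noteq> b \<longrightarrow> E a b"
  shows "defect v i = 0"
proof -
  have "completion_weight v i \<rho> = 0" if "\<rho> \<in> bases v i" for \<rho>
  proof (cases "nbrs_coloured v (3 - i) \<rho> = {}")
    case True
    then show ?thesis
      using free_nbrs_clique_no_rival[OF assms that] card_nbhd[OF assms(1)]
      by (simp add: completion_weight_eq_min min_completion_weight_degree)
  next
    case False
    then show ?thesis
      using free_nbrs_clique_rival[OF assms(2,3)] by (simp add: completion_weight_def)
  qed
  then show ?thesis
    by (simp add: defect_eq_sum_completion_weight[OF assms(2)])
qed

lemma total_defect_nonneg: "0 \<le> total_defect"
  unfolding total_defect_def by (intro sum_nonneg add_nonneg_nonneg defect_nonneg) auto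

lemma total_defect_eq_0_iff: "total_defect = 0 \<longleftrightarrow> nbhds_cliques"
proof
  assume "total_defect = 0"
  show nbhds_cliques
    unfolding nbhds_cliques_def
  proof (intro ballI impI)
    fix v a b
    assume "v \<in> V" "a \<in> nbhd v" "b \<in> nbhd v" "a \<noteq> b"
    show "E a b"
    proof (rule ccontr)
      assume "\<not> E a b"
      then have "0 < defect v 1 + defect v 2"
        using defect_pos[OF \<open>v \<in> V\<close> \<open>a \<in> nbhd v\<close> \<open>b \<in> nbhd v\<close> \<open>a \<noteq> b\<close>] defect_nonneg[OF \<open>v \<in> V\<close>, of 2]
        by simp
      then have "0 < total_defect"
        unfolding total_defect_def using \<open>v \<in> V\<close> finite_V defect_nonneg
        by (intro sum_pos2[of _ v]) (auto intro: add_nonneg_nonneg)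
      then show False
        using \<open>total_defect = 0\<close> by simp
    qed
  qed
qed (simp add: total_defect_def nbhds_cliques_def defect_eq_0)

lemma local_weight_eq:
  assumes "v \<in> V"
  shows "local_weight v = 2 * lam * q * Z - (defect v 1 + defect v 2)"
proof -
  let ?B = "{\<rho>\<in>configs. \<rho> v = 0}"
  define K where "K i \<rho> = card (nbrs_coloured v i \<rho>)" for i \<rho>
  define D where "D i \<rho> = (if K i \<rho> = 0 then 0 else lam ^ occ \<rho> *
    (lam * q - slope * K i \<rho> - (if K (3 - i) \<rho> = 0 then lam * slope * K i \<rho> else 0)))" for i \<rho>
  define z where "z \<rho> = lam ^ occ \<rho> + (if K 2 \<rho> = 0 then lam ^ (occ \<rho> + 1) else 0)
    + (if K 1 \<rho> = 0 then lam ^ (occ \<rho> + 1) else 0)" for \<rho>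
  have empty_iff: "nbrs_coloured v i \<rho> = {} \<longleftrightarrow> K i \<rho> = 0" for i \<rho>
    using finite_nbrs_coloured by (simp add: K_def)
  have upd: "occ (\<rho>(v := k)) = occ \<rho> + 1" "nbr_occ v (\<rho>(v := k)) = nbr_occ v \<rho>"
    if "\<rho> v = 0" "k \<noteq> 0" for \<rho> k
    using occ_paint[of "{v}" \<rho> k] that assms not_in_nbhd[of v]
    by (auto simp: paint_singleton nbr_occ_def intro!: arg_cong[where f = card])
  have defect_split: "defect v i = (\<Sum>\<rho>\<in>?B. D i \<rho>)" if "i \<in> {1, 2}" for i
  proof -
    have "3 - (3 - i) = i"
      using that by auto
    then have "defect v i = (\<Sum>\<rho>\<in>{\<rho>\<in>?B. nbrs_coloured v i \<rho> \<noteq> {}}. D i \<rho>)"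
      unfolding defect_def D_def by (intro sum.cong) (auto simp: K_def[symmetric] empty_iff)
    also have "\<dots> = (\<Sum>\<rho>\<in>?B. if nbrs_coloured v i \<rho> \<noteq> {} then D i \<rho> else 0)"
      by (rule sum.inter_filter) (simp add: finite_configs)
    also have "\<dots> = (\<Sum>\<rho>\<in>?B. D i \<rho>)"
      by (intro sum.cong) (auto simp: D_def empty_iff)
    finally show ?thesis .
  qed
  have "local_weight v = (\<Sum>\<rho>\<in>?B. lam ^ occ \<rho> * (slope * (K 1 \<rho> + K 2 \<rho>))
      + (if K 2 \<rho> = 0 then lam ^ (occ \<rho> + 1) * ((1 + 2 * lam) * q + slope * (K 1 \<rho> + K 2 \<rho>)) else 0)
      + (if K 1 \<rho> = 0 then lam ^ (occ \<rho> + 1) * ((1 + 2 * lam) * q + slope * (K 1 \<rho> + K 2 \<rho>)) else 0))"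
    unfolding local_weight_def sum_configs_split_at[OF assms]
    by (intro sum.cong) (auto simp: upd nbr_occ_eq K_def empty_iff)
  also have "\<dots> = (\<Sum>\<rho>\<in>?B. 2 * lam * q * z \<rho> - (D 1 \<rho> + D 2 \<rho>))"
    by (intro sum.cong) (auto simp: z_def D_def algebra_simps)
  also have "\<dots> = 2 * lam * q * (\<Sum>\<rho>\<in>?B. z \<rho>) - ((\<Sum>\<rho>\<in>?B. D 1 \<rho>) + (\<Sum>\<rho>\<in>?B. D 2 \<rho>))"
    by (simp add: sum_subtractf sum.distrib sum_distrib_left)
  also have "(\<Sum>\<rho>\<in>?B. z \<rho>) = Z"
    unfolding Z_def sum_configs_split_at[OF assms] by (intro sum.cong) (auto simp: z_def upd empty_iff)
  finally show ?thesis
    by (simp add: defect_split)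
qed

lemma sum_local_weight: "(\<Sum>v\<in>V. local_weight v) = Z_clique * occ_moment"
proof -
  have "(\<Sum>v\<in>V. local_weight v) = (\<Sum>\<sigma>\<in>configs. \<Sum>v\<in>V.
      lam ^ occ \<sigma> * ((1 + 2 * lam) * q * (if \<sigma> v \<noteq> 0 then 1 else 0) + slope * nbr_occ v \<sigma>))"
    unfolding local_weight_def by (rule sum.swap)
  also have "\<dots> = (\<Sum>\<sigma>\<in>configs. lam ^ occ \<sigma> * ((1 + 2 * lam) * q * occ \<sigma> + slope * (d * occ \<sigma>)))"
  proof (rule sum.cong[OF refl])
    fix \<sigma>
    have "(\<Sum>v\<in>V. (if \<sigma> v \<noteq> 0 then 1 else 0 :: real)) = occ \<sigma>"
      using finite_V by (simp add: sum.If_cases occ_def Int_def)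
    moreover have "(\<Sum>v\<in>V. real (nbr_occ v \<sigma>)) = d * occ \<sigma>"
      using sum_nbr_occ by (metis of_nat_sum)
    moreover have "(\<Sum>v\<in>V. lam ^ occ \<sigma> * ((1 + 2 * lam) * q * (if \<sigma> v \<noteq> 0 then 1 else 0) + slope * nbr_occ v \<sigma>))
        = lam ^ occ \<sigma> * ((1 + 2 * lam) * q * (\<Sum>v\<in>V. (if \<sigma> v \<noteq> 0 then 1 else 0 :: real))
          + slope * (\<Sum>v\<in>V. real (nbr_occ v \<sigma>)))"
      by (simp add: sum.distrib sum_distrib_left distrib_left mult.assoc)
    ultimately show "(\<Sum>v\<in>V. lam ^ occ \<sigma> * ((1 + 2 * lam) * q * (if \<sigma> v \<noteq> 0 then 1 else 0) + slope * nbr_occ v \<sigma>))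
        = lam ^ occ \<sigma> * ((1 + 2 * lam) * q * occ \<sigma> + slope * (d * occ \<sigma>))"
      by simp
  qed
  also have "\<dots> = Z_clique * occ_moment"
    by (simp add: Z_clique_def occ_moment_def sum_distrib_left sum.distrib algebra_simps)
  finally show ?thesis .
qed

lemma Z_pos: "0 < Z"
  unfolding Z_def using empty_config_in_configs finite_configs lam_pos
  by (intro sum_pos2[of _ "restrict (\<lambda>_. 0) V"]) auto

lemma Z_clique_pos: "0 < Z_clique"
  using q_ge_1 slope_nonneg lam_pos by (simp add: Z_clique_def add_pos_nonneg)

lemma occupancy_eq_moment: "WR_occupancy V E lam = occ_moment / Z / card V"
proof -
  have "WR_partition V E lam = Z"
    unfolding WR_partition_def Z_def by (intro sum.cong) (simp_all add: occupied_eq_occ)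
  moreover have "(\<Sum>\<sigma>\<in>configs. occupied V \<sigma> * lam ^ occupied V \<sigma> / Z) = occ_moment / Z"
    unfolding occ_moment_def sum_divide_distrib by (intro sum.cong) (simp_all add: occupied_eq_occ)
  ultimately show ?thesis
    by (simp add: WR_occupancy_def)
qed

lemma occupancy_eq_defect:
  "WR_occupancy V E lam = 2 * lam * q / Z_clique - total_defect / (Z_clique * Z * card V)"
proof -
  have "Z_clique * occ_moment = card V * (2 * lam * q * Z) - total_defect"
    using sum_local_weight local_weight_eq by (simp add: total_defect_def sum_subtractf)
  moreover have "0 < card V"
    using finite_V V_nonempty by (simp add: card_gt_0_iff)
  ultimately show ?thesis
    using Z_clique_pos Z_pos by (simp add: occupancy_eq_moment field_simps)
qed

end

lemma complete_graph_wr_model: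
  assumes "0 < lam"
  shows "wr_model (K_verts d) (K_edges d) d lam"
proof
  show "simple_graph (K_verts d) (K_edges d)"
    by (auto simp: simple_graph_def K_verts_def K_edges_def)
  have "{u \<in> K_verts d. K_edges d v u} = {..d} - {v}" if "v \<in> K_verts d" for v
    using that by (auto simp: K_verts_def K_edges_def)
  then show "regular (K_verts d) (K_edges d) d"
    by (simp add: regular_def K_verts_def)
qed (rule assms)

theorem theorem1:
  fixes V :: "'a set" and E :: "'a \<Rightarrow> 'a \<Rightarrow> bool" and d :: nat and lam :: real
  assumes "simple_graph V E" and "regular V E d" and "lam > 0"
  shows "WR_occupancy V E lam \<le> WR_occupancy (K_verts d) (K_edges d) lam
    \<and> (WR_occupancy V E lam = WR_occupancy (K_verts d) (K_edges d) lam
         \<longleftrightarrow> disjoint_union_of_cliques V E d)"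
proof -
  interpret G: wr_model V E d lam
    using assms by unfold_locales
  interpret K: wr_model "K_verts d" "K_edges d" d lam
    using complete_graph_wr_model assms(3) .
  have "K.nbhds_cliques"
    unfolding K.nbhds_cliques_def K.nbhd_def by (auto simp: K_verts_def K_edges_def)
  then have "WR_occupancy (K_verts d) (K_edges d) lam = 2 * lam * G.q / G.Z_clique"
    using K.occupancy_eq_defect K.total_defect_eq_0_iff by simp
  moreover have "0 < card V"
    using G.finite_V G.V_nonempty by (simp add: card_gt_0_iff)
  then have "0 \<le> G.total_defect / (G.Z_clique * G.Z * card V)"
    and "G.total_defect / (G.Z_clique * G.Z * card V) = 0 \<longleftrightarrow> disjoint_union_of_cliques V E d"
    using G.Z_clique_pos G.Z_pos G.total_defect_nonneg G.total_defect_eq_0_iff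
      G.nbhds_cliques_iff_disjoint_union_of_cliques
    by simp_all
  ultimately show ?thesis
    using G.occupancy_eq_defect by linarith
qed

end
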